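(* Let $(X,r)$ be a finite simple solution of the YBE such that $|X|$ is not prime, and let $\mathcal G=\mathcal G(X,r)$ with its natural left brace structure. Let $I$ be a minimal nonzero ideal of the left brace $\mathcal G$. Then $\mathcal G/I$ is a trivial left brace whose additive group is cyclic, and $$I=\mathcal G^2=\langle \sigma_x-\sigma_y \mid x,y\in X\rangle_+ .$$ Moreover $\mathrm{soc}(\mathcal G)=\{0\}$.
   Context: A solution of the YBE is a pair $(X,r)$, $X$ nonempty, $r:X\times X\to X\times X$, $r(x,y)=(\sigma_x(y),\gamma_y(x))$, with $r^2=\mathrm{id}$, all $\sigma_x,\gamma_x$ bijective, and $r_{12}r_{23}r_{12}=r_{23}r_{12}r_{23}$ on $X^3$ ($r_{12}=r\times \mathrm{id}$, $r_{23}=\mathrm{id}\times r$). $\mathcal G(X,r)=\langle\sigma_x:x\in X\rangle\le\mathrm{Sym}_X$. Homomorphisms of solutions are maps $f$ with $f(\sigma_x(y))=\sigma'_{f(x)}(f(y))$; $(X,r)$ is simple if $|X|>1$ and every surjective homomorphism of solutions from $(X,r)$ is bijective or has one-point image. A left brace is a set $B$ with operations $+$ and $\circ$ (written $ab=a\circ b$) such that $(B,+)$ is an abelian group, $(B,\circ)$ is a group and $a(b+c)+a=ab+ac$ for all $a,b,c$; the neutral elements coincide (denoted $0$). Its lambda map is $\lambda_a(b)=-a+ab$, giving a homomorphism $(B,\circ)\to\mathrm{Aut}(B,+)$. $B$ is trivial if $ab=a+b$ for all $a,b$. $\mathrm{soc}(B)=\{a: ab=a+b\ \forall b\}$. An ideal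 is a normal subgroup $I$ of $(B,\circ)$ with $\lambda_a(I)\subseteq I$ for all $a$; then $B/I$ is a left brace. $a*b=\lambda_a(b)-b$ and $B^2$ is the additive subgroup generated by all $a*b$. The structure group $G(X,r)$ (generators $X$, relations $xy=\sigma_x(y)\gamma_y(x)$) has a left brace structure with additive group free abelian on $X$ and $\lambda_x(y)=\sigma_x(y)$; the map $x\mapsto\sigma_x$ extends to a surjective group homomorphism $\phi:G(X,r)\to\mathcal G(X,r)$ with kernel $\mathrm{soc}(G(X,r))$, and the natural left brace structure on $\mathcal G(X,r)$ is the unique one making $\phi$ a homomorphism of left braces. *)

theory Defs
  imports "HOL-Algebra.Generated_Groups" "HOL-Algebra.Bij" "HOL-Computational_Algebra.Primes"
begin

definition ybe_r :: "('a \<Rightarrow> 'a \<Rightarrow> 'a) \<Rightarrow> ('a \<Rightarrow> 'a \<Rightarrow> 'a) \<Rightarrow> 'a \<times> 'a \<Rightarrow> 'a \<times> 'a" where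
  "ybe_r s g = (\<lambda>(x, y). (s x y, g y x))"

definition r12 :: "('a \<times> 'a \<Rightarrow> 'a \<times> 'a) \<Rightarrow> 'a \<times> 'a \<times> 'a \<Rightarrow> 'a \<times> 'a \<times> 'a" where
  "r12 r = (\<lambda>(x, y, z). (fst (r (x, y)), snd (r (x, y)), z))"

definition r23 :: "('a \<times> 'a \<Rightarrow> 'a \<times> 'a) \<Rightarrow> 'a \<times> 'a \<times> 'a \<Rightarrow> 'a \<times> 'a \<times> 'a" where
  "r23 r = (\<lambda>(x, y, z). (x, fst (r (y, z)), snd (r (y, z))))"

definition ybe_solution :: "'a set \<Rightarrow> ('a \<Rightarrow> 'a \<Rightarrow> 'a) \<Rightarrow> ('a \<Rightarrow> 'a \<Rightarrow> 'a) \<Rightarrow> bool" where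
  "ybe_solution X s g \<longleftrightarrow>
     X \<noteq> {} \<and>
     (\<forall>x\<in>X. bij_betw (s x) X X \<and> bij_betw (g x) X X) \<and>
     (\<forall>x\<in>X. \<forall>y\<in>X. ybe_r s g (ybe_r s g (x, y)) = (x, y)) \<and>
     (\<forall>x\<in>X. \<forall>y\<in>X. \<forall>z\<in>X.
        r12 (ybe_r s g) (r23 (ybe_r s g) (r12 (ybe_r s g) (x, y, z))) =
        r23 (ybe_r s g) (r12 (ybe_r s g) (r23 (ybe_r s g) (x, y, z))))"

definition sol_hom :: "'a set \<Rightarrow> ('a \<Rightarrow> 'a \<Rightarrow> 'a) \<Rightarrow> 'b set \<Rightarrow> ('b \<Rightarrow> 'b \<Rightarrow> 'b) \<Rightarrow> ('a \<Rightarrow> 'b) \<Rightarrow> bool" where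
  "sol_hom X s Y t f \<longleftrightarrow>
     (\<forall>x\<in>X. f x \<in> Y) \<and> (\<forall>x\<in>X. \<forall>y\<in>X. f (s x y) = t (f x) (f y))"

text \<open>Target solutions range over sets of the same type as X;
  since the image of a surjection from X has cardinality at most that of X,
  every possible target can be transported into this type, so this is no
  restriction.\<close>

definition simple_solution :: "'a set \<Rightarrow> ('a \<Rightarrow> 'a \<Rightarrow> 'a) \<Rightarrow> ('a \<Rightarrow> 'a \<Rightarrow> 'a) \<Rightarrow> bool" where
  "simple_solution X s g \<longleftrightarrow>
     (\<exists>x\<in>X. \<exists>y\<in>X. x \<noteq> y) \<and>
     (\<forall>(Y::'a set) t d f. ybe_solution Y t d \<and> sol_hom X s Y t f \<and> f ` X = Y
        \<longrightarrow> inj_on f X \<or> (\<exists>p. Y = {p}))"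

text \<open>sigma_x as an element of Sym_X (extensional bijections of X, HOL-Algebra).\<close>

definition sig :: "'a set \<Rightarrow> ('a \<Rightarrow> 'a \<Rightarrow> 'a) \<Rightarrow> 'a \<Rightarrow> ('a \<Rightarrow> 'a)" where
  "sig X s x = restrict (s x) X"

definition perm_group :: "'a set \<Rightarrow> ('a \<Rightarrow> 'a \<Rightarrow> 'a) \<Rightarrow> ('a \<Rightarrow> 'a) set" where
  "perm_group X s = generate (BijGroup X) (sig X s ` X)"

definition add_grp :: "'b set \<Rightarrow> ('b \<Rightarrow> 'b \<Rightarrow> 'b) \<Rightarrow> 'b \<Rightarrow> 'b monoid" where
  "add_grp B add z = \<lparr>carrier = B, monoid.mult = add, one = z\<rparr>"

definition mul_grp :: "'b set \<Rightarrow> ('b \<Rightarrow> 'b \<Rightarrow> 'b) \<Rightarrow> 'b \<Rightarrow> 'b monoid" where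
  "mul_grp B mul z = \<lparr>carrier = B, monoid.mult = mul, one = z\<rparr>"

definition left_brace :: "'b set \<Rightarrow> ('b \<Rightarrow> 'b \<Rightarrow> 'b) \<Rightarrow> ('b \<Rightarrow> 'b \<Rightarrow> 'b) \<Rightarrow> 'b \<Rightarrow> bool" where
  "left_brace B add mul z \<longleftrightarrow>
     comm_group (add_grp B add z) \<and> group (mul_grp B mul z) \<and>
     (\<forall>a\<in>B. \<forall>b\<in>B. \<forall>c\<in>B. add (mul a (add b c)) a = add (mul a b) (mul a c))"

definition b_neg :: "'b set \<Rightarrow> ('b \<Rightarrow> 'b \<Rightarrow> 'b) \<Rightarrow> 'b \<Rightarrow> 'b \<Rightarrow> 'b" where
  "b_neg B add z a = inv\<^bsub>add_grp B add z\<^esub> a"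

definition b_lambda :: "'b set \<Rightarrow> ('b \<Rightarrow> 'b \<Rightarrow> 'b) \<Rightarrow> ('b \<Rightarrow> 'b \<Rightarrow> 'b) \<Rightarrow> 'b \<Rightarrow> 'b \<Rightarrow> 'b \<Rightarrow> 'b" where
  "b_lambda B add mul z a b = add (b_neg B add z a) (mul a b)"

definition b_star :: "'b set \<Rightarrow> ('b \<Rightarrow> 'b \<Rightarrow> 'b) \<Rightarrow> ('b \<Rightarrow> 'b \<Rightarrow> 'b) \<Rightarrow> 'b \<Rightarrow> 'b \<Rightarrow> 'b \<Rightarrow> 'b" where
  "b_star B add mul z a b = add (b_lambda B add mul z a b) (b_neg B add z b)"

definition b_square :: "'b set \<Rightarrow> ('b \<Rightarrow> 'b \<Rightarrow> 'b) \<Rightarrow> ('b \<Rightarrow> 'b \<Rightarrow> 'b) \<Rightarrow> 'b \<Rightarrow> 'b set" where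
  "b_square B add mul z =
     generate (add_grp B add z) {b_star B add mul z a b | a b. a \<in> B \<and> b \<in> B}"

definition b_socle :: "'b set \<Rightarrow> ('b \<Rightarrow> 'b \<Rightarrow> 'b) \<Rightarrow> ('b \<Rightarrow> 'b \<Rightarrow> 'b) \<Rightarrow> 'b set" where
  "b_socle B add mul = {a \<in> B. \<forall>b\<in>B. mul a b = add a b}"

definition b_ideal :: "'b set \<Rightarrow> ('b \<Rightarrow> 'b \<Rightarrow> 'b) \<Rightarrow> ('b \<Rightarrow> 'b \<Rightarrow> 'b) \<Rightarrow> 'b \<Rightarrow> 'b set \<Rightarrow> bool" where
  "b_ideal B add mul z I \<longleftrightarrow>
     normal I (mul_grp B mul z) \<and> (\<forall>a\<in>B. b_lambda B add mul z a ` I \<subseteq> I)"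

definition minimal_nonzero_ideal :: "'b set \<Rightarrow> ('b \<Rightarrow> 'b \<Rightarrow> 'b) \<Rightarrow> ('b \<Rightarrow> 'b \<Rightarrow> 'b) \<Rightarrow> 'b \<Rightarrow> 'b set \<Rightarrow> bool" where
  "minimal_nonzero_ideal B add mul z I \<longleftrightarrow>
     b_ideal B add mul z I \<and> I \<noteq> {z} \<and>
     (\<forall>J. b_ideal B add mul z J \<and> J \<subseteq> I \<and> J \<noteq> {z} \<longrightarrow> J = I)"

text \<open>The quotient brace B/I: carrier the cosets of I in (B,o), with the
  induced (elementwise) operations and neutral element I.\<close>

definition quot_carrier :: "'b set \<Rightarrow> ('b \<Rightarrow> 'b \<Rightarrow> 'b) \<Rightarrow> 'b \<Rightarrow> 'b set \<Rightarrow> 'b set set" where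
  "quot_carrier B mul z I = rcosets\<^bsub>mul_grp B mul z\<^esub> I"

definition set_op :: "('b \<Rightarrow> 'b \<Rightarrow> 'b) \<Rightarrow> 'b set \<Rightarrow> 'b set \<Rightarrow> 'b set" where
  "set_op f U V = {f u v | u v. u \<in> U \<and> v \<in> V}"

definition trivial_brace :: "'b set \<Rightarrow> ('b \<Rightarrow> 'b \<Rightarrow> 'b) \<Rightarrow> ('b \<Rightarrow> 'b \<Rightarrow> 'b) \<Rightarrow> bool" where
  "trivial_brace B add mul \<longleftrightarrow> (\<forall>a\<in>B. \<forall>b\<in>B. mul a b = add a b)"

definition additive_cyclic :: "'b set \<Rightarrow> ('b \<Rightarrow> 'b \<Rightarrow> 'b) \<Rightarrow> 'b \<Rightarrow> bool" where
  "additive_cyclic B add z \<longleftrightarrow>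
     (\<exists>g\<in>B. B = {g [^]\<^bsub>add_grp B add z\<^esub> (n::int) | n. True})"

text \<open>A left-brace addition on G(X,r) (with composition as multiplication) is
  the natural one iff lambda_{sigma_x}(sigma_y) = sigma_{sigma_x(y)} for all
  x, y in X, i.e. iff phi : G(X,r) -> G(X,r) respects lambda on the
  generators (this determines the structure uniquely).\<close>

definition natural_brace_add :: "'a set \<Rightarrow> ('a \<Rightarrow> 'a \<Rightarrow> 'a) \<Rightarrow> (('a \<Rightarrow> 'a) \<Rightarrow> ('a \<Rightarrow> 'a) \<Rightarrow> ('a \<Rightarrow> 'a)) \<Rightarrow> bool" where
  "natural_brace_add X s add \<longleftrightarrow>
     left_brace (perm_group X s) add (monoid.mult (BijGroup X)) (one (BijGroup X)) \<and>
     (\<forall>x\<in>X. \<forall>y\<in>X.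
        b_lambda (perm_group X s) add (monoid.mult (BijGroup X)) (one (BijGroup X))
          (sig X s x) (sig X s y) = sig X s (s x y))"

end

theory Submission
  imports Defs "HOL-Combinatorics.Orbits" "HOL-Combinatorics.Cycles"
begin

text \<open>For an ideal J of the natural brace G, the relation sigma_x - sigma_y \<in> J on X is a
  congruence of the solution, because lambda(sigma_x, sigma_y) = sigma(sigma_x(y)) and lambda is
  well defined modulo J; by simplicity it is either equality or all of X \<times> X. For J = 0 it
  cannot be everything, since a simple solution with constant sigma has prime order; so sigma
  is injective, which makes the socle trivial and G^2 nonzero. For J \<noteq> 0 it cannot be
  equality, since every j \<in> J would then fix X pointwise; so J contains all differences
  sigma_x - sigma_y. As (G, +) is generated by the sigma_x and a * sigma_y = sigma(a y) - sigma_y,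
  G^2 lies in the span of these differences, hence in I, and minimality gives equality.
  Modulo G^2 the two operations agree, and modulo the differences all sigma_x coincide, so
  G/I is a trivial brace with cyclic additive group.\<close>

section \<open>Congruences of solutions\<close>

lemma ybe_solution_closed:
  assumes "ybe_solution X s g" "x \<in> X" "y \<in> X"
  shows "s x y \<in> X" "g x y \<in> X"
  using assms unfolding ybe_solution_def bij_betw_def by auto

lemma ybe_solution_involutive:
  assumes "ybe_solution X s g" "x \<in> X" "y \<in> X"
  shows "s (s x y) (g y x) = x" "g (g y x) (s x y) = y"
proof -
  have "ybe_r s g (ybe_r s g (x, y)) = (x, y)"
    using assms unfolding ybe_solution_def by blast
  then show "s (s x y) (g y x) = x" "g (g y x) (s x y) = y"
    by (simp_all add: ybe_r_def)
qed

lemma bij_betw_induced_on_image: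
  assumes "finite X" "f ` X = X" "\<And>y. y \<in> X \<Longrightarrow> q (f y) = f' (q y)"
  shows "bij_betw f' (q ` X) (q ` X)"
proof -
  have "f' ` q ` X = q ` X"
    using assms(2,3) by (metis (no_types, lifting) image_cong image_image)
  then show ?thesis
    using assms(1) by (simp add: bij_betw_def eq_card_imp_inj_on)
qed

lemma ybe_solution_image:
  assumes fin: "finite X" and sol: "ybe_solution X s g"
    and qs: "\<And>x y. x \<in> X \<Longrightarrow> y \<in> X \<Longrightarrow> q (s x y) = t (q x) (q y)"
    and qg: "\<And>x y. x \<in> X \<Longrightarrow> y \<in> X \<Longrightarrow> q (g x y) = d (q x) (q y)"
  shows "ybe_solution (q ` X) t d"
proof -
  note closed = ybe_solution_closed[OF sol]
  have "q ` X \<noteq> {}"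
    using sol unfolding ybe_solution_def by blast
  moreover have "bij_betw (t a) (q ` X) (q ` X) \<and> bij_betw (d a) (q ` X) (q ` X)"
    if a: "a \<in> q ` X" for a
  proof -
    obtain x where x: "x \<in> X" "a = q x"
      using a by blast
    have "s x ` X = X" "g x ` X = X"
      using sol x unfolding ybe_solution_def bij_betw_def by auto
    then show ?thesis
      using x fin qs qg by (simp add: bij_betw_induced_on_image)
  qed
  moreover have "ybe_r t d (ybe_r t d (q x, q y)) = (q x, q y)" if "x \<in> X" "y \<in> X" for x y
    using that by (simp add: ybe_r_def closed ybe_solution_involutive[OF sol] flip: qs qg)
  moreover have
    "r12 (ybe_r t d) (r23 (ybe_r t d) (r12 (ybe_r t d) (q x, q y, q z))) =
     r23 (ybe_r t d) (r12 (ybe_r t d) (r23 (ybe_r t d) (q x, q y, q z)))"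
    if "x \<in> X" "y \<in> X" "z \<in> X" for x y z
  proof -
    have "r12 (ybe_r s g) (r23 (ybe_r s g) (r12 (ybe_r s g) (x, y, z))) =
          r23 (ybe_r s g) (r12 (ybe_r s g) (r23 (ybe_r s g) (x, y, z)))"
      using sol that unfolding ybe_solution_def by blast
    then show ?thesis
      using that by (simp add: ybe_r_def r12_def r23_def closed flip: qs qg)
  qed
  ultimately show ?thesis
    unfolding ybe_solution_def by blast
qed

definition solution_congruence ::
    "'a set \<Rightarrow> ('a \<Rightarrow> 'a \<Rightarrow> 'a) \<Rightarrow> ('a \<Rightarrow> 'a \<Rightarrow> 'a) \<Rightarrow> ('a \<times> 'a) set \<Rightarrow> bool" where
  "solution_congruence X s g R \<longleftrightarrow>
     equiv X R \<and>
     (\<forall>(x, x') \<in> R. \<forall>(y, y') \<in> R. (s x y, s x' y') \<in> R \<and> (g x y, g x' y') \<in> R)"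

text \<open>The quotient by a congruence is realised inside X by a choice of representatives,
  because simplicity only speaks about target solutions carried by the type of X.\<close>

lemma simple_solution_congruence_trivial:
  assumes fin: "finite X" and sol: "ybe_solution X s g" and simple: "simple_solution X s g"
    and cong: "solution_congruence X s g R"
  shows "R = Id_on X \<or> R = X \<times> X"
proof -
  have eqv: "equiv X R"
    using cong unfolding solution_congruence_def by blast
  define rep where "rep x = (SOME y. (x, y) \<in> R)" for x
  have rep: "(x, rep x) \<in> R" if "x \<in> X" for x
    unfolding rep_def by (rule someI[of _ x]) (use eqv that in \<open>auto dest: equiv_class_self\<close>)
  have rep_eq_iff: "rep x = rep y \<longleftrightarrow> (x, y) \<in> R" if "x \<in> X" "y \<in> X" for x y
  proof
    assume "(x, y) \<in> R"
    with eqv have "R `` {x} = R `` {y}"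
      by (rule equiv_class_eq)
    then show "rep x = rep y"
      unfolding rep_def Image_singleton by (metis mem_Collect_eq)
  next
    assume "rep x = rep y"
    then show "(x, y) \<in> R"
      using rep[OF that(1)] rep[OF that(2)] eqv by (metis equivE symE transE)
  qed
  have rep_in: "rep x \<in> X" if "x \<in> X" for x
    using rep[OF that] eqv by (auto dest: equiv_type)
  have rep_s: "rep (s x y) = rep (s (rep x) (rep y))"
    and rep_g: "rep (g x y) = rep (g (rep x) (rep y))" if "x \<in> X" "y \<in> X" for x y
    using cong rep[OF that(1)] rep[OF that(2)] that rep_in
    by (auto simp: solution_congruence_def rep_eq_iff ybe_solution_closed[OF sol])
  have "ybe_solution (rep ` X) (\<lambda>a b. rep (s a b)) (\<lambda>a b. rep (g a b))"
    by (rule ybe_solution_image[OF fin sol]) (use rep_s rep_g in auto)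
  moreover have "sol_hom X s (rep ` X) (\<lambda>a b. rep (s a b)) rep"
    unfolding sol_hom_def using rep_s by auto
  ultimately have "inj_on rep X \<or> (\<exists>p. rep ` X = {p})"
    using simple unfolding simple_solution_def by blast
  then show ?thesis
  proof
    assume inj: "inj_on rep X"
    have "x = y" if "(x, y) \<in> R" for x y
      using that equiv_type[OF eqv] rep_eq_iff inj_onD[OF inj] by blast
    then have "R = Id_on X"
      using eqv equiv_type[OF eqv] unfolding equiv_def refl_on_def by auto
    then show ?thesis ..
  next
    assume "\<exists>p. rep ` X = {p}"
    then have "rep x = rep y" if "x \<in> X" "y \<in> X" for x y
      using that by (metis imageI singletonD)
    then have "R = X \<times> X"
      using rep_eq_iff equiv_type[OF eqv] by auto
    then show ?thesis ..
  qed
qed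

section \<open>Permutation solutions\<close>

definition orbit_rel :: "'a set \<Rightarrow> ('a \<Rightarrow> 'a) \<Rightarrow> ('a \<times> 'a) set" where
  "orbit_rel X p = {(u, v) \<in> X \<times> X. v \<in> orbit p u}"

lemma equiv_orbit_rel:
  assumes "permutation p"
  shows "equiv X (orbit_rel X p)"
  unfolding orbit_rel_def equiv_def refl_on_def sym_def trans_def
  using permutation_self_in_orbit[OF assms] by (auto intro: orbit_swap orbit_trans)

lemma orbit_rel_funpow_invariant:
  assumes "p permutes X" "finite X" "u \<in> X" "v \<in> X"
  shows "(p u, p v) \<in> orbit_rel X (p ^^ d) \<longleftrightarrow> (u, v) \<in> orbit_rel X (p ^^ d)"
proof -
  have perm: "permutation (p ^^ d)"
    using assms by (simp add: permutation_funpow permutes_imp_permutation)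
  have commute: "((p ^^ d) ^^ n) (p w) = p (((p ^^ d) ^^ n) w)" for n w
    by (simp add: funpow_mult funpow_swap1)
  have "p v \<in> orbit (p ^^ d) (p u) \<longleftrightarrow> v \<in> orbit (p ^^ d) u"
    using permutes_inj[OF assms(1)]
    by (auto simp: orbit_altdef_permutation[OF perm] commute dest: injD)
  then show ?thesis
    using assms by (simp add: orbit_rel_def permutes_in_image)
qed

lemma cyclic_permutation_funpow_eq_iff:
  assumes "permutation p" "X = orbit p x"
  shows "(p ^^ i) x = (p ^^ j) x \<longleftrightarrow> i mod card X = j mod card X"
proof -
  define n where "n = least_power p x"
  have "X = set (support p x)"
    using support_set[OF assms(1), of x] assms orbit_altdef_permutation[OF assms(1)]
    by (simp add: full_SetCompr_eq)
  then have card: "card X = n"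
    using distinct_card[OF cycle_of_permutation[OF assms(1), of x]] by (simp add: n_def)
  have inj: "inj_on (\<lambda>i. (p ^^ i) x) {..<n}"
    using cycle_of_permutation[OF assms(1), of x] by (simp add: n_def distinct_map atLeast_upt)
  have period: "(p ^^ n) x = x" "0 < n"
    using least_power_of_permutation[OF assms(1)] by (simp_all add: n_def)
  have "(p ^^ i) x = (p ^^ j) x \<longleftrightarrow> (p ^^ (i mod n)) x = (p ^^ (j mod n)) x"
    using period(1) by (simp add: funpow_mod_eq)
  also have "\<dots> \<longleftrightarrow> i mod n = j mod n"
    using inj period(2) by (auto dest: inj_onD)
  finally show ?thesis
    by (simp add: card)
qed

lemma card_ge_3_nontrivial_equiv:
  assumes "3 \<le> card X"
  obtains R where "equiv X R" "R \<noteq> Id_on X" "R \<noteq> X \<times> X"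
proof -
  obtain Y where "Y \<subseteq> X" "card Y = 3"
    using assms by (rule obtain_subset_with_card_n)
  then obtain x y z where xyz: "x \<in> X" "y \<in> X" "z \<in> X" "x \<noteq> y" "x \<noteq> z" "y \<noteq> z"
    unfolding card_3_iff by blast
  define R where "R = {(u, v) \<in> X \<times> X. u = x \<longleftrightarrow> v = x}"
  have "equiv X R"
    unfolding R_def equiv_def refl_on_def sym_def trans_def by auto
  moreover have "(y, z) \<in> R" "(x, y) \<notin> R"
    using xyz unfolding R_def by auto
  ultimately show thesis
    using that[of R] xyz by auto
qed

text \<open>Powers of a single cycle of length n: for a proper divisor d of n, the orbits of p^d
  are the d residue classes of exponents modulo d.\<close>

lemma cyclic_permutation_funpow_orbit_rel_nontrivial:
  assumes perm: "permutation p" and X: "X = orbit p x"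
    and d: "d dvd card X" "1 < d" "d < card X"
  shows "orbit_rel X (p ^^ d) \<noteq> Id_on X" "orbit_rel X (p ^^ d) \<noteq> X \<times> X"
proof -
  note period = cyclic_permutation_funpow_eq_iff[OF assms(1,2)]
  have in_X: "(p ^^ n) x \<in> X" for n
    using X orbit_altdef_permutation[OF perm] by blast
  have "(x, (p ^^ d) x) \<in> orbit_rel X (p ^^ d)"
    using in_X[of 0] in_X[of d] orbit.base[of "p ^^ d" x] unfolding orbit_rel_def by simp
  moreover have "(p ^^ d) x \<noteq> x"
    using period[of d 0] d by simp
  ultimately show "orbit_rel X (p ^^ d) \<noteq> Id_on X"
    by auto
  have "(x, p x) \<notin> orbit_rel X (p ^^ d)"
  proof
    assume "(x, p x) \<in> orbit_rel X (p ^^ d)"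
    then obtain k where "((p ^^ d) ^^ k) x = (p ^^ 1) x"
      using orbit_altdef_permutation[OF permutation_funpow[OF perm]]
      unfolding orbit_rel_def by auto
    then have "(p ^^ (d * k)) x = (p ^^ 1) x"
      by (simp only: funpow_mult)
    then have "(d * k) mod card X = 1 mod card X"
      by (simp only: period)
    then have "(d * k) mod d = 1 mod d"
      using mod_mod_cancel[OF d(1)] by metis
    then show False
      using d(2) by simp
  qed
  then show "orbit_rel X (p ^^ d) \<noteq> X \<times> X"
    using in_X[of 0] in_X[of 1] by auto
qed

lemma composite_permutation_invariant_equiv:
  assumes fin: "finite X" and perm: "p permutes X"
    and card: "1 < card X" "\<not> prime (card X)"
  obtains R where "equiv X R" "\<And>u v. u \<in> X \<Longrightarrow> v \<in> X \<Longrightarrow> (p u, p v) \<in> R \<longleftrightarrow> (u, v) \<in> R"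
    "R \<noteq> Id_on X" "R \<noteq> X \<times> X"
proof -
  have permutation: "permutation p"
    using fin perm by (rule permutes_imp_permutation)
  consider "orbit_rel X p \<noteq> Id_on X" "orbit_rel X p \<noteq> X \<times> X"
    | "orbit_rel X p = Id_on X" | "orbit_rel X p = X \<times> X"
    by blast
  then show thesis
  proof cases
    case 1
    show thesis
      by (rule that[OF equiv_orbit_rel[OF permutation]])
        (use 1 orbit_rel_funpow_invariant[OF perm fin, of _ _ 1] in auto)
  next
    case 2
    have "p u = u" if "u \<in> X" for u
      using 2 that perm orbit.base[of p u] by (auto simp: orbit_rel_def permutes_in_image)
    moreover have "card X \<noteq> 2"
      using card(2) by auto
    then have "3 \<le> card X"
      using card(1) by linarith
    then obtain R where "equiv X R" "R \<noteq> Id_on X" "R \<noteq> X \<times> X"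
      by (rule card_ge_3_nontrivial_equiv)
    ultimately show thesis
      using that[of R] by auto
  next
    case 3
    obtain x where x: "x \<in> X"
      using card by fastforce
    have "orbit p x \<subseteq> X"
      using x perm orbit_altdef_permutation[OF permutation]
      by (auto simp: permutes_in_image permutes_funpow)
    moreover have "X \<subseteq> orbit p x"
      using 3 x unfolding orbit_rel_def by blast
    ultimately have cycle: "X = orbit p x"
      by blast
    obtain d where d: "d dvd card X" "d \<noteq> 1" "d \<noteq> card X"
      using card unfolding prime_nat_iff by blast
    have "d \<noteq> 0"
      using card(1) d(1) by (rule_tac notI) simp
    then have "1 < d" "d < card X"
      using card(1) d dvd_imp_le[OF d(1)] by linarith+
    then show thesis
      using that[OF equiv_orbit_rel[OF permutation_funpow[OF permutation]]]
        orbit_rel_funpow_invariant[OF perm fin]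
        cyclic_permutation_funpow_orbit_rel_nontrivial[OF permutation cycle d(1)]
      by blast
  qed
qed

lemma simple_permutation_solution_card_prime:
  assumes fin: "finite X" and sol: "ybe_solution X s g" and simple: "simple_solution X s g"
    and x0: "x0 \<in> X" and const: "\<And>x y. x \<in> X \<Longrightarrow> y \<in> X \<Longrightarrow> s x y = s x0 y"
  shows "prime (card X)"
proof (rule ccontr)
  assume not_prime: "\<not> prime (card X)"
  obtain x y where "x \<in> X" "y \<in> X" "x \<noteq> y"
    using simple unfolding simple_solution_def by blast
  then have "card {x, y} \<le> card X"
    using fin by (intro card_mono) auto
  then have "1 < card X"
    using \<open>x \<noteq> y\<close> by simp
  define p where "p y = (if y \<in> X then s x0 y else y)" for y
  have "p permutes X"
    using sol x0 unfolding p_def ybe_solution_def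
    by (intro bij_imp_permutes) (auto simp: bij_betw_def inj_on_def)
  then obtain R where R: "equiv X R" "\<And>u v. u \<in> X \<Longrightarrow> v \<in> X \<Longrightarrow> (p u, p v) \<in> R \<longleftrightarrow> (u, v) \<in> R"
    "R \<noteq> Id_on X" "R \<noteq> X \<times> X"
    using composite_permutation_invariant_equiv fin \<open>1 < card X\<close> not_prime by metis
  have ps: "s x y = p y" and pg: "p (g x y) = y" if "x \<in> X" "y \<in> X" for x y
    using that const ybe_solution_involutive[OF sol that(2,1)] ybe_solution_closed[OF sol]
    unfolding p_def by metis+
  have "(s x y, s x' y') \<in> R \<and> (g x y, g x' y') \<in> R"
    if "(x, x') \<in> R" "(y, y') \<in> R" for x x' y y'
  proof -
    have X: "x \<in> X" "x' \<in> X" "y \<in> X" "y' \<in> X"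
      using that equiv_type[OF R(1)] by auto
    have "(p y, p y') \<in> R"
      using R(2) X that(2) by blast
    moreover have "(g x y, g x' y') \<in> R"
      using R(2)[of "g x y" "g x' y'"] X that(2) by (simp add: pg ybe_solution_closed[OF sol])
    ultimately show ?thesis
      using X by (simp add: ps)
  qed
  then have "solution_congruence X s g R"
    unfolding solution_congruence_def using R(1) by blast
  then show False
    using simple_solution_congruence_trivial[OF fin sol simple] R(3,4) by blast
qed

section \<open>Left braces\<close>

lemma set_op_mult_eq_set_mult: "set_op (monoid.mult G) = set_mult G"
  by (intro ext) (auto simp: set_op_def set_mult_def)

lemma (in group) FactGroup_carrier_eq_int_pows:
  assumes N: "N \<lhd> G" and gen: "carrier G = generate G S" and a: "a \<in> S"
    and same_coset: "\<And>x. x \<in> S \<Longrightarrow> N #> x = N #> a"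
  shows "carrier (G Mod N) = {(N #> a) [^]\<^bsub>G Mod N\<^esub> (k::int) | k. True}"
proof -
  interpret h: group_hom G "G Mod N" "(#>) N"
    using N by (simp add: group_hom_def group_hom_axioms_def is_group normal.factorgroup_is_group
        normal.r_coset_hom_Mod)
  have S: "S \<subseteq> carrier G"
    using gen generate.incl[of _ S G] by blast
  have "carrier (G Mod N) = (#>) N ` carrier G"
    unfolding FactGroup_def RCOSETS_def by (simp add: UNION_singleton_eq_range)
  also have "\<dots> = generate (G Mod N) ((#>) N ` S)"
    using h.generate_img[OF S] gen by simp
  also have "(#>) N ` S = {N #> a}"
    using same_coset a by blast
  also have "generate (G Mod N) {N #> a} = {(N #> a) [^]\<^bsub>G Mod N\<^esub> (k::int) | k. True}"
    using h.H.generate_pow[of "N #> a"] a S h.hom_closed by blast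
  finally show ?thesis .
qed

lemma hom_image_generate_subset:
  assumes "f \<in> hom G H" "group G" "group H" "S \<subseteq> carrier G" "f ` S \<subseteq> T"
  shows "f ` generate G S \<subseteq> generate H T"
proof -
  interpret f: group_hom G H f
    using assms(1-3) by (simp add: group_hom_def group_hom_axioms_def)
  show ?thesis
    using assms(4,5) by (simp add: f.generate_img[symmetric] f.H.mono_generate)
qed

locale brace =
  fixes B :: "'b set" and add mul :: "'b \<Rightarrow> 'b \<Rightarrow> 'b" and z :: 'b
  assumes left_brace: "left_brace B add mul z"
begin

abbreviation "AG \<equiv> add_grp B add z"
abbreviation "MG \<equiv> mul_grp B mul z"
abbreviation "neg \<equiv> b_neg B add z"
abbreviation "lam \<equiv> b_lambda B add mul z"
abbreviation "minv \<equiv> m_inv MG"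

lemma AG_simps [simp]: "carrier AG = B" "monoid.mult AG = add" "one AG = z"
  by (simp_all add: add_grp_def)

lemma MG_simps [simp]: "carrier MG = B" "monoid.mult MG = mul" "one MG = z"
  by (simp_all add: mul_grp_def)

sublocale A: comm_group AG
  using left_brace unfolding left_brace_def by blast

sublocale M: group MG
  using left_brace unfolding left_brace_def by blast

lemma brace_law: "a \<in> B \<Longrightarrow> b \<in> B \<Longrightarrow> c \<in> B \<Longrightarrow> add (mul a (add b c)) a = add (mul a b) (mul a c)"
  using left_brace unfolding left_brace_def by blast

lemma add_closed [simp, intro]: "a \<in> B \<Longrightarrow> b \<in> B \<Longrightarrow> add a b \<in> B"
  using A.m_closed by simp
lemma mul_closed [simp, intro]: "a \<in> B \<Longrightarrow> b \<in> B \<Longrightarrow> mul a b \<in> B"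
  using M.m_closed by simp
lemma neg_closed [simp, intro]: "a \<in> B \<Longrightarrow> neg a \<in> B"
  unfolding b_neg_def using A.inv_closed by simp
lemma minv_closed [simp, intro]: "a \<in> B \<Longrightarrow> minv a \<in> B"
  using M.inv_closed by simp
lemma zero_closed [simp, intro]: "z \<in> B"
  using A.one_closed by simp

lemma add_assoc: "a \<in> B \<Longrightarrow> b \<in> B \<Longrightarrow> c \<in> B \<Longrightarrow> add (add a b) c = add a (add b c)"
  using A.m_assoc by simp
lemma add_commute: "a \<in> B \<Longrightarrow> b \<in> B \<Longrightarrow> add a b = add b a"
  using A.m_comm by simp
lemma add_left_commute: "a \<in> B \<Longrightarrow> b \<in> B \<Longrightarrow> c \<in> B \<Longrightarrow> add a (add b c) = add b (add a c)"
  using A.m_lcomm by simp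
lemmas add_ac = add_assoc add_commute add_left_commute

lemma add_zero [simp]: "a \<in> B \<Longrightarrow> add a z = a" "a \<in> B \<Longrightarrow> add z a = a"
  using A.r_one A.l_one by simp_all
lemma add_neg [simp]: "a \<in> B \<Longrightarrow> add a (neg a) = z" "a \<in> B \<Longrightarrow> add (neg a) a = z"
  unfolding b_neg_def using A.r_inv A.l_inv by simp_all
lemma add_neg_cancel_left [simp]:
  "a \<in> B \<Longrightarrow> c \<in> B \<Longrightarrow> add a (add (neg a) c) = c"
  "a \<in> B \<Longrightarrow> c \<in> B \<Longrightarrow> add (neg a) (add a c) = c"
  by (simp_all flip: add_assoc)
lemma add_neg_cancel_middle [simp]:
  "a \<in> B \<Longrightarrow> b \<in> B \<Longrightarrow> c \<in> B \<Longrightarrow> add a (add b (add (neg a) c)) = add b c"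
  "a \<in> B \<Longrightarrow> b \<in> B \<Longrightarrow> c \<in> B \<Longrightarrow> add (neg a) (add b (add a c)) = add b c"
  "a \<in> B \<Longrightarrow> b \<in> B \<Longrightarrow> add a (add b (neg a)) = b"
  "a \<in> B \<Longrightarrow> b \<in> B \<Longrightarrow> add (neg a) (add b a) = b"
  using add_left_commute[of a b "add (neg a) c"] add_left_commute[of "neg a" b "add a c"]
    add_left_commute[of a b "neg a"] add_left_commute[of "neg a" b a] by simp_all
lemma neg_neg [simp]: "a \<in> B \<Longrightarrow> neg (neg a) = a"
  unfolding b_neg_def using A.inv_inv by simp
lemma neg_add: "a \<in> B \<Longrightarrow> b \<in> B \<Longrightarrow> neg (add a b) = add (neg a) (neg b)"
  unfolding b_neg_def using A.inv_mult by simp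
lemma neg_zero [simp]: "neg z = z"
  unfolding b_neg_def using A.inv_one by simp
lemma add_eq_zero_iff: "a \<in> B \<Longrightarrow> b \<in> B \<Longrightarrow> add a b = z \<longleftrightarrow> b = neg a"
  by (metis add_neg(2) add_neg_cancel_left(2) add_zero(1) neg_closed)

lemma mul_assoc: "a \<in> B \<Longrightarrow> b \<in> B \<Longrightarrow> c \<in> B \<Longrightarrow> mul (mul a b) c = mul a (mul b c)"
  using M.m_assoc by simp
lemma mul_zero [simp]: "a \<in> B \<Longrightarrow> mul a z = a" "a \<in> B \<Longrightarrow> mul z a = a"
  using M.r_one M.l_one by simp_all
lemma mul_minv [simp]: "a \<in> B \<Longrightarrow> mul a (minv a) = z" "a \<in> B \<Longrightarrow> mul (minv a) a = z"
  using M.r_inv M.l_inv by simp_all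

lemma lam_eq: "lam a b = add (neg a) (mul a b)"
  unfolding b_lambda_def by simp

lemma lam_closed [simp, intro]: "a \<in> B \<Longrightarrow> b \<in> B \<Longrightarrow> lam a b \<in> B"
  unfolding lam_eq by simp

lemma mul_eq_add_lam: "a \<in> B \<Longrightarrow> b \<in> B \<Longrightarrow> mul a b = add a (lam a b)"
  unfolding lam_eq by simp

lemma lam_add:
  assumes "a \<in> B" "b \<in> B" "c \<in> B"
  shows "lam a (add b c) = add (lam a b) (lam a c)"
proof -
  have "add (mul a (add b c)) a = add (mul a b) (mul a c)"
    using brace_law assms by blast
  then have "mul a (add b c) = add (add (mul a b) (mul a c)) (neg a)"
    using assms by (metis add_assoc add_closed add_neg(1) add_zero(1) mul_closed neg_closed)
  then show ?thesis
    unfolding lam_eq using assms by (simp add: add_ac)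
qed

lemma lam_zero [simp]: "a \<in> B \<Longrightarrow> lam a z = z"
  unfolding lam_eq by simp

lemma lam_neg:
  assumes "a \<in> B" "b \<in> B"
  shows "lam a (neg b) = neg (lam a b)"
  using lam_add[of a b "neg b"] assms add_eq_zero_iff[of "lam a b" "lam a (neg b)"] by simp

lemma lam_of_zero [simp]: "b \<in> B \<Longrightarrow> lam z b = b"
  unfolding lam_eq by simp

lemma lam_mul:
  assumes "a \<in> B" "b \<in> B" "c \<in> B"
  shows "lam (mul a b) c = lam a (lam b c)"
proof -
  have "lam a (lam b c) = add (neg (lam a b)) (lam a (mul b c))"
    using assms by (simp add: lam_eq[of b c] lam_add lam_neg)
  also have "\<dots> = add (neg (mul a b)) (mul a (mul b c))"
    using assms by (simp add: lam_eq neg_add add_ac)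
  finally show ?thesis
    using assms by (simp add: lam_eq mul_assoc)
qed

lemma lam_minv [simp]:
  assumes "a \<in> B" "c \<in> B"
  shows "lam (minv a) (lam a c) = c" "lam a (lam (minv a) c) = c"
  using assms by (simp_all flip: lam_mul)

lemma lam_hom: "a \<in> B \<Longrightarrow> lam a \<in> hom AG AG"
  by (rule homI) (simp_all add: lam_add)

lemma lam_minv_self: "a \<in> B \<Longrightarrow> lam a (minv a) = neg a"
  using mul_eq_add_lam[of a "minv a"] add_eq_zero_iff[of a "lam a (minv a)"] by simp

lemma minv_eq_lam_neg: "a \<in> B \<Longrightarrow> minv a = lam (minv a) (neg a)"
  by (metis lam_minv(1) lam_minv_self minv_closed)

lemma star_eq: "b_star B add mul z a b = add (lam a b) (neg b)"
  unfolding b_star_def ..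

lemma star_closed [simp, intro]: "a \<in> B \<Longrightarrow> b \<in> B \<Longrightarrow> b_star B add mul z a b \<in> B"
  by (simp add: star_eq)

lemma star_hom: "a \<in> B \<Longrightarrow> b_star B add mul z a \<in> hom AG AG"
  by (rule homI) (simp_all add: star_eq lam_add neg_add add_ac)

lemma mul_eq_add_star: "a \<in> B \<Longrightarrow> b \<in> B \<Longrightarrow> mul a b = add (b_star B add mul z a b) (add a b)"
  by (simp add: star_eq mul_eq_add_lam add_ac)

lemma conj_eq_lam_star:
  assumes c: "c \<in> B" and j: "j \<in> B"
  shows "mul (mul c j) (minv c) = lam c (add j (b_star B add mul z j (minv c)))"
proof -
  have "mul j (minv c) = add (minv c) (add j (b_star B add mul z j (minv c)))"
    using c j by (simp add: mul_eq_add_star add_ac)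
  then have "mul (mul c j) (minv c) = mul c (add (minv c) (add j (b_star B add mul z j (minv c))))"
    using c j by (simp add: mul_assoc)
  also have "\<dots> = add (mul c (minv c)) (lam c (add j (b_star B add mul z j (minv c))))"
    using c j by (simp add: mul_eq_add_lam lam_add add_assoc)
  finally show ?thesis
    using c j by simp
qed

lemma ideal_intro:
  assumes sub: "subgroup J AG"
    and lam_mem: "\<And>c j. c \<in> B \<Longrightarrow> j \<in> J \<Longrightarrow> lam c j \<in> J"
    and star_mem: "\<And>j c. j \<in> J \<Longrightarrow> c \<in> B \<Longrightarrow> add (lam j c) (neg c) \<in> J"
  shows "b_ideal B add mul z J"
proof -
  have JB: "J \<subseteq> B"
    using sub subgroup.subset by fastforce
  have add_mem: "add a b \<in> J" if "a \<in> J" "b \<in> J" for a b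
    using sub subgroup.m_closed that by fastforce
  have neg_mem: "neg a \<in> J" if "a \<in> J" for a
    using sub subgroup.m_inv_closed that unfolding b_neg_def by fastforce
  have mul_mem: "mul a b \<in> J" if "a \<in> J" "b \<in> J" for a b
  proof -
    have "a \<in> B" "b \<in> B"
      using that JB by auto
    then show ?thesis
      using that by (simp add: mul_eq_add_lam add_mem lam_mem)
  qed
  have minv_mem: "minv a \<in> J" if "a \<in> J" for a
    using that JB minv_eq_lam_neg[of a] lam_mem neg_mem by (metis minv_closed subsetD)
  have "z \<in> J"
    using sub subgroup.one_closed by fastforce
  then have "subgroup J MG"
    using JB mul_mem minv_mem by (intro M.subgroupI) auto
  moreover have "mul (mul c j) (minv c) \<in> J" if "c \<in> B" "j \<in> J" for c j
  proof -
    have "add j (b_star B add mul z j (minv c)) \<in> J"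
      using that star_mem add_mem by (simp add: star_eq)
    then show ?thesis
      using that JB lam_mem by (simp add: conj_eq_lam_star subsetD)
  qed
  ultimately have "J \<lhd> MG"
    by (simp add: M.normal_inv_iff)
  then show ?thesis
    unfolding b_ideal_def using lam_mem by blast
qed

lemma zero_ideal: "b_ideal B add mul z {z}"
proof (rule ideal_intro)
  show "subgroup {z} AG"
    using A.triv_subgroup by simp
qed auto

lemma lam_star:
  assumes "a \<in> B" "b \<in> B" "c \<in> B"
  shows "lam c (b_star B add mul z a b) = b_star B add mul z (mul (mul c a) (minv c)) (lam c b)"
proof -
  have "lam (mul (mul c a) (minv c)) (lam c b) = lam c (lam a b)"
    using assms by (simp add: lam_mul)
  then show ?thesis
    using assms by (simp add: star_eq lam_add lam_neg)
qed

lemma square_ideal: "b_ideal B add mul z (b_square B add mul z)"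
proof -
  define S where "S = {b_star B add mul z a b | a b. a \<in> B \<and> b \<in> B}"
  have S: "S \<subseteq> B"
    unfolding S_def star_eq by auto
  have sq: "b_square B add mul z = generate AG S"
    unfolding b_square_def S_def ..
  show ?thesis
    unfolding sq
  proof (rule ideal_intro)
    show "subgroup (generate AG S) AG"
      using S by (simp add: A.generate_is_subgroup)
    show "lam c j \<in> generate AG S" if c: "c \<in> B" and j: "j \<in> generate AG S" for c j
    proof -
      have "lam c (b_star B add mul z a b) \<in> S" if "a \<in> B" "b \<in> B" for a b
      proof -
        have "mul (mul c a) (minv c) \<in> B" "lam c b \<in> B"
          using c that by auto
        then show ?thesis
          unfolding S_def lam_star[OF that c] by blast
      qed
      then have "lam c ` S \<subseteq> S"
        unfolding S_def by blast
      then have "lam c ` generate AG S \<subseteq> generate AG S"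
        using S c lam_hom A.is_group by (intro hom_image_generate_subset) simp_all
      then show ?thesis
        using j by blast
    qed
    show "add (lam j c) (neg c) \<in> generate AG S" if "j \<in> generate AG S" "c \<in> B" for j c
    proof -
      have "j \<in> B"
        using A.generate_in_carrier[of S j] S that(1) by simp
      then have "b_star B add mul z j c \<in> S"
        unfolding S_def using that(2) by blast
      then show ?thesis
        unfolding star_eq by (rule generate.incl)
    qed
  qed
qed

lemma star_mem_square: "a \<in> B \<Longrightarrow> b \<in> B \<Longrightarrow> b_star B add mul z a b \<in> b_square B add mul z"
  unfolding b_square_def by (rule generate.incl) blast

end

locale brace_ideal = brace +
  fixes J
  assumes ideal: "b_ideal B add mul z J"
begin

lemma normal_mul: "J \<lhd> MG"
  using ideal unfolding b_ideal_def by blast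

lemma lam_mem: "c \<in> B \<Longrightarrow> j \<in> J \<Longrightarrow> lam c j \<in> J"
  using ideal unfolding b_ideal_def by blast

lemma subset: "J \<subseteq> B"
  using normal_mul normal_imp_subgroup subgroup.subset by fastforce

lemma mem_carrier [simp, intro]: "j \<in> J \<Longrightarrow> j \<in> B"
  using subset by blast

lemma zero_mem [simp, intro]: "z \<in> J"
  using normal_mul normal_imp_subgroup subgroup.one_closed by fastforce

lemma mul_mem: "a \<in> J \<Longrightarrow> b \<in> J \<Longrightarrow> mul a b \<in> J"
  using normal_mul normal_imp_subgroup subgroup.m_closed by fastforce

lemma conj_mem:
  assumes "c \<in> B" "j \<in> J"
  shows "mul (mul (minv c) j) c \<in> J"
proof -
  have "mul (mul x h) (minv x) \<in> J" if "x \<in> B" "h \<in> J" for x h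
    using normal_mul that M.normal_inv_iff[of J] by simp
  from this[of "minv c" j] show ?thesis
    using assms M.inv_inv[of c] by simp
qed

lemma add_mem: "a \<in> J \<Longrightarrow> b \<in> J \<Longrightarrow> add a b \<in> J"
  using mul_mem[of a "lam (minv a) b"] lam_mem[of "minv a" b] by (simp add: mul_eq_add_lam)

lemma minv_mem: "a \<in> J \<Longrightarrow> minv a \<in> J"
  using normal_mul normal_imp_subgroup subgroup.m_inv_closed by fastforce

lemma neg_mem: "a \<in> J \<Longrightarrow> neg a \<in> J"
  using lam_mem[of a "minv a"] minv_mem by (simp add: lam_minv_self)

lemma star_mem:
  assumes "j \<in> J" "c \<in> B"
  shows "add (lam j c) (neg c) \<in> J"
proof -
  define j' where "j' = mul (mul (minv c) j) c"
  have j': "j' \<in> J"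
    unfolding j'_def using conj_mem assms by blast
  have "mul j c = mul c j'"
    unfolding j'_def using assms by (simp flip: mul_assoc)
  then have "add (lam j c) (neg c) = add (neg j) (lam c j')"
    using assms j' by (simp add: lam_eq[of j c] mul_eq_add_lam[of c j'] add_ac)
  then show ?thesis
    using assms j' by (simp add: add_mem neg_mem lam_mem)
qed

lemma additive_subgroup: "subgroup J AG"
proof (rule A.subgroupI)
  show "inv\<^bsub>AG\<^esub> a \<in> J" if "a \<in> J" for a
    using neg_mem[OF that] unfolding b_neg_def .
qed (use subset add_mem in auto)

text \<open>Writing a' = a j with j \<in> J, we get lambda(a', b') = lambda(a, lambda(j, b')), and
  lambda(j, b') - b' \<in> J.\<close>

lemma lam_congruent:
  assumes B: "a \<in> B" "a' \<in> B" "b \<in> B" "b' \<in> B"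
    and cong: "add a (neg a') \<in> J" "add b (neg b') \<in> J"
  shows "add (lam a b) (neg (lam a' b')) \<in> J"
proof -
  have "add (lam a b) (neg (lam a b')) = lam a (add b (neg b'))"
    using B by (simp add: lam_add lam_neg)
  then have same_a: "add (lam a b) (neg (lam a b')) \<in> J"
    using lam_mem cong(2) B by simp
  define j where "j = lam (minv a) (add a' (neg a))"
  have "add a' (neg a) = neg (add a (neg a'))"
    using B by (simp add: neg_add add_ac)
  then have j: "j \<in> J"
    unfolding j_def using cong(1) B by (simp add: neg_mem lam_mem)
  have a': "a' = mul a j"
    unfolding j_def using B by (simp add: mul_eq_add_lam add_ac)
  define t where "t = add (lam j b') (neg b')"
  have t: "t \<in> J"
    unfolding t_def using star_mem j B by blast
  have "lam a' b' = add (lam a b') (lam a t)"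
    unfolding a' t_def using B j by (simp add: lam_mul lam_add[symmetric] add_ac)
  then have "add (lam a b') (neg (lam a' b')) = neg (lam a t)"
    using B t by (simp add: neg_add add_ac)
  then have same_b: "add (lam a b') (neg (lam a' b')) \<in> J"
    using neg_mem lam_mem B t by simp
  have "add (lam a b) (neg (lam a' b')) =
      add (add (lam a b) (neg (lam a b'))) (add (lam a b') (neg (lam a' b')))"
    using B by (simp add: add_ac)
  then show ?thesis
    using add_mem[OF same_a same_b] by simp
qed

lemma lam_congruent_cancel:
  assumes B: "c \<in> B" "c' \<in> B" "u \<in> B" "u' \<in> B"
    and cong: "add c (neg c') \<in> J" "add (lam c u) (neg (lam c' u')) \<in> J"
  shows "add u (neg u') \<in> J"
proof -
  have "add (lam c u') (neg (lam c' u')) \<in> J"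
    using lam_congruent[OF B(1,2,4,4) cong(1)] B by simp
  then have "add (add (lam c u) (neg (lam c' u'))) (neg (add (lam c u') (neg (lam c' u')))) \<in> J"
    using cong(2) by (simp add: add_mem neg_mem)
  then have "lam c (add u (neg u')) \<in> J"
    using B by (simp add: lam_add lam_neg neg_add add_ac)
  then show ?thesis
    using lam_mem[of "minv c" "lam c (add u (neg u'))"] B by simp
qed

lemma lam_image:
  assumes a: "a \<in> B"
  shows "lam a ` J = J"
proof
  show "lam a ` J \<subseteq> J"
    using lam_mem a by blast
  show "J \<subseteq> lam a ` J"
  proof
    fix j assume "j \<in> J"
    then have "j = lam a (lam (minv a) j)" "lam (minv a) j \<in> J"
      using a lam_mem by auto
    then show "j \<in> lam a ` J"
      by blast
  qed
qed

lemma mul_coset_eq_add_coset: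
  assumes a: "a \<in> B"
  shows "J #>\<^bsub>MG\<^esub> a = J #>\<^bsub>AG\<^esub> a"
proof -
  have "J #>\<^bsub>MG\<^esub> a = (\<lambda>j. mul a j) ` J"
    using normal.coset_eq[OF normal_mul] a unfolding l_coset_def by auto
  also have "\<dots> = (\<lambda>j. add a j) ` lam a ` J"
    using a by (auto simp: mul_eq_add_lam image_image)
  also have "\<dots> = J #>\<^bsub>AG\<^esub> a"
    using a lam_image by (auto simp: r_coset_def add_commute)
  finally show ?thesis .
qed

lemma quot_carrier_eq: "quot_carrier B mul z J = rcosets\<^bsub>AG\<^esub> J"
  unfolding quot_carrier_def RCOSETS_def using mul_coset_eq_add_coset by simp

lemma quotient_add_grp_eq: "add_grp (quot_carrier B mul z J) (set_op add) J = AG Mod J"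
  using set_op_mult_eq_set_mult[of AG]
  by (simp add: add_grp_def FactGroup_def quot_carrier_eq)

lemma quotient_trivial_brace:
  assumes square: "b_square B add mul z \<subseteq> J"
  shows "trivial_brace (quot_carrier B mul z J) (set_op add) (set_op mul)"
  unfolding trivial_brace_def
proof (intro ballI)
  fix U V assume "U \<in> quot_carrier B mul z J" "V \<in> quot_carrier B mul z J"
  then obtain a b where ab: "a \<in> B" "b \<in> B" "U = J #>\<^bsub>AG\<^esub> a" "V = J #>\<^bsub>AG\<^esub> b"
    unfolding quot_carrier_eq RCOSETS_def by auto
  have "set_op mul U V = J #>\<^bsub>MG\<^esub> mul a b"
    using normal.rcos_sum[OF normal_mul] ab set_op_mult_eq_set_mult[of MG]
    by (simp add: mul_coset_eq_add_coset[symmetric])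
  also have "\<dots> = J #>\<^bsub>AG\<^esub> add a b"
  proof -
    have "mul a b \<in> J #>\<^bsub>AG\<^esub> add a b"
      using ab square star_mem_square[of a b] unfolding r_coset_def
      by (auto simp: mul_eq_add_star[of a b])
    then show ?thesis
      using ab A.repr_independence[OF _ _ additive_subgroup] mul_coset_eq_add_coset by simp
  qed
  also have "\<dots> = set_op add U V"
    using normal.rcos_sum[OF A.subgroup_imp_normal[OF additive_subgroup]] ab
      set_op_mult_eq_set_mult[of AG] by simp
  finally show "set_op mul U V = set_op add U V" .
qed

end

section \<open>The natural brace of a solution\<close>

locale natural_brace =
  fixes X :: "'a set" and s g :: "'a \<Rightarrow> 'a \<Rightarrow> 'a"
    and add :: "('a \<Rightarrow> 'a) \<Rightarrow> ('a \<Rightarrow> 'a) \<Rightarrow> ('a \<Rightarrow> 'a)"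
  assumes sol: "ybe_solution X s g"
    and natural: "natural_brace_add X s add"
begin

abbreviation "G \<equiv> perm_group X s"
abbreviation "mul \<equiv> monoid.mult (BijGroup X)"
abbreviation "e \<equiv> one (BijGroup X)"
abbreviation "\<sigma> \<equiv> sig X s"

sublocale brace G add mul e
  using natural unfolding natural_brace_add_def by unfold_locales blast

interpretation Sym: group "BijGroup X"
  by (rule group_BijGroup)

lemma lam_sig_sig: "x \<in> X \<Longrightarrow> y \<in> X \<Longrightarrow> lam (\<sigma> x) (\<sigma> y) = \<sigma> (s x y)"
  using natural unfolding natural_brace_add_def by blast

lemma sig_apply: "y \<in> X \<Longrightarrow> \<sigma> x y = s x y"
  unfolding sig_def by simp

lemma sig_in_Sym: "\<sigma> ` X \<subseteq> carrier (BijGroup X)"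
proof -
  have "bij_betw (s x) X X" if "x \<in> X" for x
    using sol that unfolding ybe_solution_def by blast
  then show ?thesis
    unfolding sig_def BijGroup_def Bij_def by auto
qed

lemma sig_in_G [simp, intro]: "x \<in> X \<Longrightarrow> \<sigma> x \<in> G"
  unfolding perm_group_def by (rule generate.incl) simp

lemma G_subset_Sym: "G \<subseteq> carrier (BijGroup X)"
  unfolding perm_group_def using Sym.generate_incl[OF sig_in_Sym] .

lemma one_apply: "y \<in> X \<Longrightarrow> e y = y"
  by (simp add: BijGroup_def)

lemma mul_apply: "a \<in> G \<Longrightarrow> b \<in> G \<Longrightarrow> y \<in> X \<Longrightarrow> mul a b y = a (b y)"
  using G_subset_Sym by (auto simp: BijGroup_def compose_def)

lemma G_apply_closed: "a \<in> G \<Longrightarrow> y \<in> X \<Longrightarrow> a y \<in> X"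
  using G_subset_Sym Bij_imp_funcset by (fastforce simp: BijGroup_def)

lemma G_eq_one:
  assumes "a \<in> G" "\<And>y. y \<in> X \<Longrightarrow> a y = y"
  shows "a = e"
proof -
  have "a \<in> extensional X"
    using assms G_subset_Sym Bij_imp_extensional by (fastforce simp: BijGroup_def)
  then show ?thesis
    using assms by (auto simp: BijGroup_def extensional_def)
qed

lemma Sym_inv_eq_minv:
  assumes "a \<in> G"
  shows "inv\<^bsub>BijGroup X\<^esub> a = minv a"
proof -
  have "inv\<^bsub>BijGroup X\<^esub> a \<in> G"
    using assms Sym.generate_m_inv_closed[OF sig_in_Sym] unfolding perm_group_def by simp
  moreover have "mul (inv\<^bsub>BijGroup X\<^esub> a) a = e"
    using assms G_subset_Sym by auto
  ultimately show ?thesis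
    using M.inv_equality[of "inv\<^bsub>BijGroup X\<^esub> a" a] assms by simp
qed

lemma lam_sig:
  assumes "a \<in> G" "y \<in> X"
  shows "lam a (\<sigma> y) = \<sigma> (a y)"
proof -
  have "a \<in> generate (BijGroup X) (\<sigma> ` X)"
    using assms(1) unfolding perm_group_def .
  then have "\<forall>y\<in>X. lam a (\<sigma> y) = \<sigma> (a y)"
  proof (induction rule: generate.induct)
    case one
    then show ?case
      by (simp add: one_apply)
  next
    case (incl h)
    then show ?case
      using lam_sig_sig sig_apply by auto
  next
    case (inv h)
    then obtain x where x: "x \<in> X" "h = \<sigma> x"
      by blast
    show ?case
    proof
      fix y assume y: "y \<in> X"
      define w where "w = minv h y"
      have "minv h \<in> G"
        using x by simp
      then have "w \<in> X" "h w = mul h (minv h) y"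
        using x y G_apply_closed mul_apply[of h "minv h" y] unfolding w_def by simp_all
      then have w: "w \<in> X" "h w = y"
        using x y one_apply by simp_all
      have "lam h (\<sigma> w) = \<sigma> y"
        using lam_sig_sig x w sig_apply by simp
      then have "lam (minv h) (\<sigma> y) = \<sigma> w"
        using x w by (metis lam_minv(1) sig_in_G)
      then show "lam (inv\<^bsub>BijGroup X\<^esub> h) (\<sigma> y) = \<sigma> ((inv\<^bsub>BijGroup X\<^esub> h) y)"
        using Sym_inv_eq_minv x w_def by simp
    qed
  next
    case (eng h1 h2)
    then have "h1 \<in> G" "h2 \<in> G"
      unfolding perm_group_def by auto
    then show ?case
      using eng.IH G_apply_closed by (simp add: lam_mul mul_apply)
  qed
  then show ?thesis
    using assms(2) by blast
qed

lemma lam_image_sig_span: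
  assumes "c \<in> G"
  shows "lam c ` generate AG (\<sigma> ` X) \<subseteq> generate AG (\<sigma> ` X)"
proof (rule hom_image_generate_subset)
  show "lam c ` \<sigma> ` X \<subseteq> \<sigma> ` X"
    using assms lam_sig G_apply_closed by auto
qed (use assms lam_hom A.is_group in auto)

lemma G_eq_sig_span: "G = generate AG (\<sigma> ` X)"
proof
  let ?H = "generate AG (\<sigma> ` X)"
  have H_G: "?H \<subseteq> G"
    using A.generate_incl[of "\<sigma> ` X"] by auto
  have neg_mem: "neg a \<in> ?H" if "a \<in> ?H" for a
    using A.generate_m_inv_closed[of "\<sigma> ` X" a] that unfolding b_neg_def by auto
  have add_mem: "add a b \<in> ?H" if "a \<in> ?H" "b \<in> ?H" for a b
    using generate.eng[OF that] by simp
  have "subgroup ?H (BijGroup X)"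
  proof (rule Sym.subgroupI)
    show "?H \<subseteq> carrier (BijGroup X)"
      using H_G G_subset_Sym by blast
    show "?H \<noteq> {}"
      using generate.one by blast
    show "inv\<^bsub>BijGroup X\<^esub> a \<in> ?H" if "a \<in> ?H" for a
    proof -
      have "a \<in> G"
        using that H_G by blast
      then have "inv\<^bsub>BijGroup X\<^esub> a = lam (minv a) (neg a)"
        by (simp add: Sym_inv_eq_minv minv_eq_lam_neg[symmetric])
      then show ?thesis
        using lam_image_sig_span[of "minv a"] neg_mem[OF that] \<open>a \<in> G\<close> by auto
    qed
    show "a \<otimes>\<^bsub>BijGroup X\<^esub> b \<in> ?H" if "a \<in> ?H" "b \<in> ?H" for a b
    proof -
      have "a \<in> G" "b \<in> G"
        using that H_G by auto
      then have "a \<otimes>\<^bsub>BijGroup X\<^esub> b = add a (lam a b)"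
        by (simp add: mul_eq_add_lam)
      then show ?thesis
        using add_mem lam_image_sig_span[of a] that \<open>a \<in> G\<close> by auto
    qed
  qed
  then show "G \<subseteq> ?H"
    unfolding perm_group_def by (rule Sym.generate_subgroup_incl[rotated]) (auto intro: generate.incl)
  show "?H \<subseteq> G"
    by (fact H_G)
qed

abbreviation "sig_diff_span \<equiv> generate AG {add (\<sigma> x) (neg (\<sigma> y)) | x y. x \<in> X \<and> y \<in> X}"

lemma square_subset_sig_diff_span: "b_square G add mul e \<subseteq> sig_diff_span"
  unfolding b_square_def
proof (rule A.generate_subgroup_incl)
  show "subgroup sig_diff_span AG"
    by (rule A.generate_is_subgroup) auto
  have "b_star G add mul e a ` generate AG (\<sigma> ` X) \<subseteq> sig_diff_span" if a: "a \<in> G" for a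
  proof (rule hom_image_generate_subset)
    show "b_star G add mul e a ` \<sigma> ` X \<subseteq> {add (\<sigma> x) (neg (\<sigma> y)) | x y. x \<in> X \<and> y \<in> X}"
      using a lam_sig G_apply_closed by (fastforce simp: star_eq)
  qed (use a star_hom A.is_group in auto)
  then show "{b_star G add mul e a b | a b. a \<in> G \<and> b \<in> G} \<subseteq> sig_diff_span"
    using equalityD1[OF G_eq_sig_span] by blast
qed

lemma quotient_additive_cyclic:
  assumes J: "b_ideal G add mul e J" and diffs: "sig_diff_span \<subseteq> J"
  shows "additive_cyclic (quot_carrier G mul e J) (set_op add) J"
proof -
  interpret J: brace_ideal G add mul e J
    by unfold_locales (fact J)
  obtain x0 where x0: "x0 \<in> X"
    using sol unfolding ybe_solution_def by blast
  have same_coset: "J #>\<^bsub>AG\<^esub> \<sigma> x = J #>\<^bsub>AG\<^esub> \<sigma> x0" if x: "x \<in> X" for x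
  proof -
    have "add (\<sigma> x) (neg (\<sigma> x0)) \<in> sig_diff_span"
      by (rule generate.incl) (use x x0 in blast)
    then have "add (add (\<sigma> x) (neg (\<sigma> x0))) (\<sigma> x0) \<in> J #>\<^bsub>AG\<^esub> \<sigma> x0"
      using diffs A.rcosI[of _ J "\<sigma> x0"] J.subset x0 by auto
    then have "\<sigma> x \<in> J #>\<^bsub>AG\<^esub> \<sigma> x0"
      using x x0 by (simp add: add_assoc)
    from A.repr_independence[OF this _ J.additive_subgroup] show ?thesis
      using x0 by simp
  qed
  have "carrier AG = generate AG (\<sigma> ` X)"
    by (simp only: AG_simps) (rule G_eq_sig_span)
  then have "carrier (AG Mod J) = {(J #>\<^bsub>AG\<^esub> \<sigma> x0) [^]\<^bsub>AG Mod J\<^esub> (k::int) | k. True}"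
    by (rule A.FactGroup_carrier_eq_int_pows[OF A.subgroup_imp_normal[OF J.additive_subgroup]])
      (use x0 same_coset in blast)+
  moreover have "J #>\<^bsub>AG\<^esub> \<sigma> x0 \<in> carrier (AG Mod J)"
    using A.rcosetsI[of J "\<sigma> x0"] J.subset x0 by (simp add: FactGroup_def)
  ultimately have "\<exists>U \<in> carrier (AG Mod J). carrier (AG Mod J) = {U [^]\<^bsub>AG Mod J\<^esub> (k::int) | k. True}"
    by blast
  moreover have "quot_carrier G mul e J = carrier (AG Mod J)"
    using J.quot_carrier_eq unfolding FactGroup_def by simp
  ultimately show ?thesis
    unfolding additive_cyclic_def J.quotient_add_grp_eq by simp
qed

lemma sig_congruence:
  assumes J: "b_ideal G add mul e J"
  shows "solution_congruence X s g {(x, y) \<in> X \<times> X. add (\<sigma> x) (neg (\<sigma> y)) \<in> J}"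
    (is "solution_congruence X s g ?R")
proof -
  interpret J: brace_ideal G add mul e J
    by unfold_locales (fact J)
  have "equiv X ?R"
  proof (rule equivI)
    show "sym ?R"
    proof (rule symI)
      fix x y assume "(x, y) \<in> ?R"
      moreover have "add (\<sigma> y) (neg (\<sigma> x)) = neg (add (\<sigma> x) (neg (\<sigma> y)))"
        if "x \<in> X" "y \<in> X"
        using that by (simp add: neg_add add_commute)
      ultimately show "(y, x) \<in> ?R"
        by (auto simp: J.neg_mem)
    qed
    show "trans ?R"
    proof (rule transI)
      fix x y w assume "(x, y) \<in> ?R" "(y, w) \<in> ?R"
      moreover have "add (\<sigma> x) (neg (\<sigma> w)) =
          add (add (\<sigma> x) (neg (\<sigma> y))) (add (\<sigma> y) (neg (\<sigma> w)))"
        if "x \<in> X" "y \<in> X" "w \<in> X"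
        using that by (simp add: add_assoc)
      ultimately show "(x, w) \<in> ?R"
        by (auto simp: J.add_mem)
    qed
  qed (auto simp: refl_on_def)
  moreover have s_compat: "(s x y, s x' y') \<in> ?R" if "(x, x') \<in> ?R" "(y, y') \<in> ?R" for x x' y y'
    using that J.lam_congruent[of "\<sigma> x" "\<sigma> x'" "\<sigma> y" "\<sigma> y'"]
    by (auto simp: lam_sig_sig ybe_solution_closed[OF sol])
  moreover have "(g x y, g x' y') \<in> ?R" if "(x, x') \<in> ?R" "(y, y') \<in> ?R" for x x' y y'
  proof -
    have X: "x \<in> X" "x' \<in> X" "y \<in> X" "y' \<in> X"
      using that by auto
    have "\<sigma> y = lam (\<sigma> (s y x)) (\<sigma> (g x y))" "\<sigma> y' = lam (\<sigma> (s y' x')) (\<sigma> (g x' y'))"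
      using X by (simp_all add: lam_sig_sig ybe_solution_closed[OF sol] ybe_solution_involutive[OF sol])
    moreover have "(s y x, s y' x') \<in> ?R"
      using s_compat that by blast
    ultimately show ?thesis
      using that X J.lam_congruent_cancel[of "\<sigma> (s y x)" "\<sigma> (s y' x')" "\<sigma> (g x y)" "\<sigma> (g x' y')"]
      by (auto simp: ybe_solution_closed[OF sol])
  qed
  ultimately show ?thesis
    unfolding solution_congruence_def by blast
qed

end

locale simple_natural_brace = natural_brace +
  assumes finite: "finite X"
    and simple: "simple_solution X s g"
    and not_prime: "\<not> prime (card X)"
begin

lemma sig_congruence_trivial:
  assumes "b_ideal G add mul e J"
  shows "(\<forall>x\<in>X. \<forall>y\<in>X. add (\<sigma> x) (neg (\<sigma> y)) \<in> J \<longrightarrow> x = y)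
    \<or> (\<forall>x\<in>X. \<forall>y\<in>X. add (\<sigma> x) (neg (\<sigma> y)) \<in> J)"
proof -
  let ?R = "{(x, y) \<in> X \<times> X. add (\<sigma> x) (neg (\<sigma> y)) \<in> J}"
  from simple_solution_congruence_trivial[OF finite sol simple sig_congruence[OF assms]]
  have "?R = Id_on X \<or> ?R = X \<times> X" .
  then show ?thesis
  proof
    assume "?R = Id_on X"
    then have "(x, y) \<in> Id_on X" if "x \<in> X" "y \<in> X" "add (\<sigma> x) (neg (\<sigma> y)) \<in> J" for x y
      using that by blast
    then show ?thesis
      by blast
  next
    assume "?R = X \<times> X"
    then show ?thesis
      by blast
  qed
qed

lemma sig_inj: "inj_on \<sigma> X"
proof (rule inj_onI)
  fix x y assume xy: "x \<in> X" "y \<in> X" "\<sigma> x = \<sigma> y"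
  have diff_zero_iff: "add (\<sigma> u) (neg (\<sigma> v)) \<in> {e} \<longleftrightarrow> \<sigma> u = \<sigma> v"
    if "u \<in> X" "v \<in> X" for u v
  proof -
    have "add (\<sigma> u) (neg (\<sigma> v)) = e \<longleftrightarrow> neg (\<sigma> v) = neg (\<sigma> u)"
      using that add_eq_zero_iff by simp
    also have "\<dots> \<longleftrightarrow> \<sigma> u = \<sigma> v"
      using that by (metis neg_neg sig_in_G)
    finally show ?thesis
      by simp
  qed
  show "x = y"
    using sig_congruence_trivial[OF zero_ideal]
  proof
    assume "\<forall>u\<in>X. \<forall>v\<in>X. add (\<sigma> u) (neg (\<sigma> v)) \<in> {e} \<longrightarrow> u = v"
    then show "x = y"
      using xy diff_zero_iff by blast
  next
    assume "\<forall>u\<in>X. \<forall>v\<in>X. add (\<sigma> u) (neg (\<sigma> v)) \<in> {e}"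
    then have "\<sigma> u = \<sigma> x" if "u \<in> X" for u
      using that xy diff_zero_iff by blast
    then have "s u v = s x v" if "u \<in> X" "v \<in> X" for u v
      using that by (metis sig_apply)
    then have "prime (card X)"
      using simple_permutation_solution_card_prime[OF finite sol simple xy(1)] by blast
    then show "x = y"
      using not_prime by blast
  qed
qed

lemma sig_diff_span_subset_ideal:
  assumes J: "b_ideal G add mul e J" and nonzero: "J \<noteq> {e}"
  shows "sig_diff_span \<subseteq> J"
proof -
  interpret J: brace_ideal G add mul e J
    by unfold_locales (fact J)
  show ?thesis
    using sig_congruence_trivial[OF J]
  proof
    assume trivial: "\<forall>x\<in>X. \<forall>y\<in>X. add (\<sigma> x) (neg (\<sigma> y)) \<in> J \<longrightarrow> x = y"
    have "j = e" if j: "j \<in> J" for j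
    proof (rule G_eq_one)
      show "j \<in> G"
        using j by blast
      show "j y = y" if y: "y \<in> X" for y
      proof -
        have "add (\<sigma> (j y)) (neg (\<sigma> y)) \<in> J"
          using J.star_mem[OF j, of "\<sigma> y"] lam_sig[of j y] j y by auto
        then show ?thesis
          using trivial y G_apply_closed[of j y] j by blast
      qed
    qed
    then show ?thesis
      using nonzero J.zero_mem by blast
  next
    assume "\<forall>x\<in>X. \<forall>y\<in>X. add (\<sigma> x) (neg (\<sigma> y)) \<in> J"
    then show ?thesis
      by (intro A.generate_subgroup_incl J.additive_subgroup) blast
  qed
qed

lemma square_nonzero: "b_square G add mul e \<noteq> {e}"
proof
  assume square: "b_square G add mul e = {e}"
  have "s x y = y" if "x \<in> X" "y \<in> X" for x y
  proof -
    have "add (lam (\<sigma> x) (\<sigma> y)) (neg (\<sigma> y)) = e"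
      using star_mem_square[of "\<sigma> x" "\<sigma> y"] that square by (simp add: star_eq)
    then have "neg (\<sigma> y) = neg (\<sigma> (s x y))"
      using that add_eq_zero_iff by (simp add: lam_sig_sig ybe_solution_closed[OF sol])
    then have "\<sigma> (s x y) = \<sigma> y"
      using that by (metis neg_neg sig_in_G ybe_solution_closed(1)[OF sol])
    then show ?thesis
      using that sig_inj ybe_solution_closed[OF sol] by (meson inj_onD)
  qed
  then have "\<sigma> x = e" if "x \<in> X" for x
    using that G_eq_one[of "\<sigma> x"] sig_apply by simp
  moreover obtain x y where "x \<in> X" "y \<in> X" "x \<noteq> y"
    using simple unfolding simple_solution_def by blast
  ultimately show False
    using sig_inj by (metis inj_onD)
qed

lemma socle_eq: "b_socle G add mul = {e}"
proof
  show "b_socle G add mul \<subseteq> {e}"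
  proof
    fix a assume "a \<in> b_socle G add mul"
    then have a: "a \<in> G" and socle: "\<And>b. b \<in> G \<Longrightarrow> mul a b = add a b"
      unfolding b_socle_def by auto
    have "a y = y" if y: "y \<in> X" for y
    proof -
      have "\<sigma> (a y) = \<sigma> y"
        using socle[of "\<sigma> y"] lam_sig[OF a y] a y by (simp add: lam_eq)
      then show ?thesis
        using sig_inj G_apply_closed[OF a y] y by (meson inj_onD)
    qed
    then show "a \<in> {e}"
      using G_eq_one[OF a] by blast
  qed
  show "{e} \<subseteq> b_socle G add mul"
    unfolding b_socle_def by auto
qed

lemma minimal_ideal_eq:
  assumes "minimal_nonzero_ideal G add mul e I"
  shows "I = b_square G add mul e" "I = sig_diff_span"
proof -
  have "sig_diff_span \<subseteq> I"
    using assms sig_diff_span_subset_ideal unfolding minimal_nonzero_ideal_def by blast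
  then have "b_square G add mul e \<subseteq> I"
    using square_subset_sig_diff_span by blast
  then show "I = b_square G add mul e"
    using assms square_ideal square_nonzero unfolding minimal_nonzero_ideal_def by blast
  then show "I = sig_diff_span"
    using square_subset_sig_diff_span \<open>sig_diff_span \<subseteq> I\<close> by blast
qed

end

theorem mainTheorem3:
  fixes X :: "'a set" and s g :: "'a \<Rightarrow> 'a \<Rightarrow> 'a"
    and add :: "('a \<Rightarrow> 'a) \<Rightarrow> ('a \<Rightarrow> 'a) \<Rightarrow> ('a \<Rightarrow> 'a)"
    and I :: "('a \<Rightarrow> 'a) set"
  assumes fin: "finite X"
    and sol: "ybe_solution X s g"
    and simple: "simple_solution X s g"
    and notprime: "\<not> prime (card X)"
    and nat: "natural_brace_add X s add"
    and minI: "minimal_nonzero_ideal (perm_group X s) add (monoid.mult (BijGroup X)) (one (BijGroup X)) I"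
  shows "trivial_brace (quot_carrier (perm_group X s) (monoid.mult (BijGroup X)) (one (BijGroup X)) I)
            (set_op add) (set_op (monoid.mult (BijGroup X)))
       \<and> additive_cyclic (quot_carrier (perm_group X s) (monoid.mult (BijGroup X)) (one (BijGroup X)) I)
            (set_op add) I
       \<and> I = b_square (perm_group X s) add (monoid.mult (BijGroup X)) (one (BijGroup X))
       \<and> I = generate (add_grp (perm_group X s) add (one (BijGroup X)))
              {add (sig X s x) (b_neg (perm_group X s) add (one (BijGroup X)) (sig X s y)) | x y. x \<in> X \<and> y \<in> X}
       \<and> b_socle (perm_group X s) add (monoid.mult (BijGroup X)) = {one (BijGroup X)}"
proof -
  interpret simple_natural_brace X s g add
    using fin sol simple notprime nat by unfold_locales
  have ideal: "b_ideal (perm_group X s) add (monoid.mult (BijGroup X)) (one (BijGroup X)) I"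
    using minI unfolding minimal_nonzero_ideal_def by blast
  interpret I: brace_ideal "perm_group X s" add "monoid.mult (BijGroup X)" "one (BijGroup X)" I
    by unfold_locales (fact ideal)
  note I_eq = minimal_ideal_eq[OF minI]
  show ?thesis
    using I.quotient_trivial_brace quotient_additive_cyclic[OF ideal] I_eq socle_eq by auto
qed

end
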